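(* Let $D$ be a BN distribution on $\{0,1\}^n$ with all conditional probabilities in $(0,1)$ and variable order $1,\dots,n$ a topological order, and let $f:\{0,1\}^n\to\mathbb{R}$ satisfy $\mathbb{E}_D[f(X)^2]\le 1$. Let $\theta>0$, $0\le k\le n$, and let $U$ be distributed as $(X_1,\dots,X_{n-k})$ for $X\sim D$. Then: (1) the number of $S\subseteq[n]$ with $|\hat f_S|\ge\theta$ is at most $1/\theta^2$; (2) for every $\alpha\in\{0,1\}^k$, $\mathbb{E}[g_\alpha(U)^2]=\sum_{\beta\in\{0,1\}^{n-k}}\hat f_{\beta\alpha}^2$; (3) if there is $\beta\in\{0,1\}^{n-k}$ with $|\hat f_{\beta\alpha}|\ge\theta$ then $\mathbb{E}[g_\alpha(U)^2]\ge\theta^2$; (4) the number of $\alpha\in\{0,1\}^k$ with $\mathbb{E}[g_\alpha(U)^2]\ge\theta^2$ is at most $1/\theta^2$.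
   Context: A Bayesian network (BN) on binary variables $X_1,\dots,X_n$ is a directed acyclic graph on $[n]$ with parent sets $\operatorname{pa}(v)$ and conditional distributions with $P(X_1,\dots,X_n)=\prod_v P(X_v\mid X_{\operatorname{pa}(v)})$. Let $\mu_{v,x_{\operatorname{pa}(v)}}=P(X_v=1\mid X_{\operatorname{pa}(v)}=x_{\operatorname{pa}(v)})$, $\sigma_{v,x_{\operatorname{pa}(v)}}=\sqrt{\mu_{v,x_{\operatorname{pa}(v)}}(1-\mu_{v,x_{\operatorname{pa}(v)}})}$, $\phi_v(x)=(x_v-\mu_{v,x_{\operatorname{pa}(v)}})/\sigma_{v,x_{\operatorname{pa}(v)}}$, $\phi_S=\prod_{v\in S}\phi_v$, and $\hat f_S=\mathbb{E}_D[f(X)\phi_S(X)]$. Sets $S\subseteq[n]$ are identified with strings $\gamma\in\{0,1\}^n$ via $\gamma_i=1\iff i\in S$. For $\beta\in\{0,1\}^{n-k}$, $\alpha\in\{0,1\}^k$, $\beta\alpha$ is their concatenation ($\beta$ in coordinates $1,\dots,n-k$), $0^m$ the zero string of length $m$, and $g_\alpha(u)=\sum_{\beta\in\{0,1\}^{n-k}}\hat f_{\beta\alpha}\,\phi_{\beta0^k}(u0^k)$ for $u\in\{0,1\}^{n-k}$. *)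

theory Defs
  imports Complex_Main
begin

text \<open>A point x in {0,1}^n is represented by the set of coordinates
equal to 1, i.e. a subset of {1..n}; likewise sets S of variables are subsets of {1..n}
(so strings gamma and sets S coincide). A Bayesian network with variable order 1..n
is given by parent sets pa v and conditional probabilities cp v A = P(X_v = 1 | X_pa(v) = 1_A)
for A a subset of pa v.\<close>

definition bn_mu :: "(nat \<Rightarrow> nat set) \<Rightarrow> (nat \<Rightarrow> nat set \<Rightarrow> real) \<Rightarrow> nat \<Rightarrow> nat set \<Rightarrow> real" where
  "bn_mu pa cp v x = cp v (x \<inter> pa v)"

definition bn_sigma :: "(nat \<Rightarrow> nat set) \<Rightarrow> (nat \<Rightarrow> nat set \<Rightarrow> real) \<Rightarrow> nat \<Rightarrow> nat set \<Rightarrow> real" where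
  "bn_sigma pa cp v x = sqrt (bn_mu pa cp v x * (1 - bn_mu pa cp v x))"

definition bn_phi :: "(nat \<Rightarrow> nat set) \<Rightarrow> (nat \<Rightarrow> nat set \<Rightarrow> real) \<Rightarrow> nat \<Rightarrow> nat set \<Rightarrow> real" where
  "bn_phi pa cp v x = ((if v \<in> x then 1 else 0) - bn_mu pa cp v x) / bn_sigma pa cp v x"

definition bn_phiS :: "(nat \<Rightarrow> nat set) \<Rightarrow> (nat \<Rightarrow> nat set \<Rightarrow> real) \<Rightarrow> nat set \<Rightarrow> nat set \<Rightarrow> real" where
  "bn_phiS pa cp S x = (\<Prod>v\<in>S. bn_phi pa cp v x)"

definition bn_prob :: "nat \<Rightarrow> (nat \<Rightarrow> nat set) \<Rightarrow> (nat \<Rightarrow> nat set \<Rightarrow> real) \<Rightarrow> nat set \<Rightarrow> real" where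
  "bn_prob n pa cp x = (\<Prod>v\<in>{1..n}. if v \<in> x then bn_mu pa cp v x else 1 - bn_mu pa cp v x)"

definition bn_expect :: "nat \<Rightarrow> (nat \<Rightarrow> nat set) \<Rightarrow> (nat \<Rightarrow> nat set \<Rightarrow> real) \<Rightarrow> (nat set \<Rightarrow> real) \<Rightarrow> real" where
  "bn_expect n pa cp h = (\<Sum>x\<in>Pow {1..n}. bn_prob n pa cp x * h x)"

definition fourier_coeff :: "nat \<Rightarrow> (nat \<Rightarrow> nat set) \<Rightarrow> (nat \<Rightarrow> nat set \<Rightarrow> real) \<Rightarrow> (nat set \<Rightarrow> real) \<Rightarrow> nat set \<Rightarrow> real" where
  "fourier_coeff n pa cp f S = bn_expect n pa cp (\<lambda>x. f x * bn_phiS pa cp S x)"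

text \<open>Concatenation beta alpha: beta in coordinates 1..n-k, alpha (a subset of {1..k})
shifted to coordinates n-k+1..n.\<close>
definition concat_str :: "nat \<Rightarrow> nat \<Rightarrow> nat set \<Rightarrow> nat set \<Rightarrow> nat set" where
  "concat_str n k \<beta> \<alpha> = \<beta> \<union> (\<lambda>i. i + (n - k)) ` \<alpha>"

text \<open>g_alpha(u) = sum over beta of hat f_{beta alpha} phi_{beta 0^k}(u 0^k); u 0^k is just u
(a subset of {1..n-k}) in the set representation.\<close>
definition g_alpha :: "nat \<Rightarrow> nat \<Rightarrow> (nat \<Rightarrow> nat set) \<Rightarrow> (nat \<Rightarrow> nat set \<Rightarrow> real) \<Rightarrow> (nat set \<Rightarrow> real) \<Rightarrow> nat set \<Rightarrow> nat set \<Rightarrow> real" where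
  "g_alpha n k pa cp f \<alpha> u =
     (\<Sum>\<beta>\<in>Pow {1..n-k}. fourier_coeff n pa cp f (concat_str n k \<beta> \<alpha>) * bn_phiS pa cp \<beta> u)"

definition marg_expect :: "nat \<Rightarrow> nat \<Rightarrow> (nat \<Rightarrow> nat set) \<Rightarrow> (nat \<Rightarrow> nat set \<Rightarrow> real) \<Rightarrow> (nat set \<Rightarrow> real) \<Rightarrow> real" where
  "marg_expect n k pa cp h = bn_expect n pa cp (\<lambda>x. h (x \<inter> {1..n-k}))"

end

theory Submission
  imports Defs
begin

(*
  The standardized local characters phi_S are orthonormal in L2(D). To see this, integrate out
  the last variable N of the topological order: every phi_v with v < N depends only on earlier
  coordinates, while given the parents of N the factor phi_N is a standardized Bernoulli variable,
  so E[phi_S phi_T] = E[phi_(S-N) phi_(T-N)] [N in S <-> N in T]. Bessel's inequality then gives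
  sum_S hat f_S^2 <= E[f^2] <= 1, which bounds the number of coefficients with |hat f_S| >= theta.
  A character phi_beta supported on the first n-k variables depends only on those variables, so
  g_alpha(U) can be evaluated on X itself and E[g_alpha(U)^2] = sum_beta hat f_(beta alpha)^2 by
  orthonormality; as beta alpha runs through every S exactly once, these masses add up to at most 1.
*)

lemma sum_Pow_insert:
  assumes "finite A" "a \<notin> A"
  shows "(\<Sum>X\<in>Pow (insert a A). h X) = (\<Sum>X\<in>Pow A. h X + h (insert a X))"
proof -
  have "(\<Sum>X\<in>Pow (insert a A). h X) = (\<Sum>X\<in>Pow A. h X) + (\<Sum>X\<in>insert a ` Pow A. h X)"
    unfolding Pow_insert by (rule sum.union_disjoint) (use assms in auto)
  also have "(\<Sum>X\<in>insert a ` Pow A. h X) = (\<Sum>X\<in>Pow A. h (insert a X))"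
    by (subst sum.reindex) (use assms in \<open>auto intro!: inj_onI simp: insert_ident\<close>)
  finally show ?thesis
    by (simp add: sum.distrib)
qed

lemma card_superlevel_le:
  fixes h :: "'a \<Rightarrow> real"
  assumes "finite B" "A \<subseteq> B" "\<And>x. x \<in> B \<Longrightarrow> 0 \<le> h x" "sum h B \<le> M"
    and "\<And>x. x \<in> A \<Longrightarrow> t \<le> h x" "t > 0"
  shows "real (card A) \<le> M / t"
proof -
  have "real (card A) * t \<le> sum h A"
    using assms(5) by (rule sum_bounded_below)
  also have "\<dots> \<le> sum h B"
    using assms(1-3) by (intro sum_mono2) auto
  finally show ?thesis
    using assms(4,6) by (simp add: pos_le_divide_eq)
qed

lemma bernoulli_standardized_orthonormal:
  fixes p s :: real
  assumes "s\<^sup>2 = p * (1 - p)" "s \<noteq> 0"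
  shows "(1 - p) * ((if a then - p / s else 1) * (if b then - p / s else 1))
       + p * ((if a then (1 - p) / s else 1) * (if b then (1 - p) / s else 1)) = (if a = b then 1 else 0)"
proof -
  have "(1 - p) * (p / s * (p / s)) + p * ((1 - p) / s * ((1 - p) / s)) = p * (1 - p) / s\<^sup>2"
    using assms(2) by (simp add: field_simps power2_eq_square)
  also have "\<dots> = 1"
    using assms by (metis divide_self power_not_zero)
  finally show ?thesis
    using assms(2) by (cases a; cases b) (auto simp: field_simps)
qed

lemma sum_concat_str:
  assumes "k \<le> n"
  shows "(\<Sum>\<alpha>\<in>Pow {1..k}. \<Sum>\<beta>\<in>Pow {1..n-k}. h (concat_str n k \<beta> \<alpha>)) = (\<Sum>S\<in>Pow {1..n}. h S)"
proof -
  let ?shift = "\<lambda>i. i + (n - k)" and ?unshift = "\<lambda>i. i - (n - k)"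
  let ?concat = "\<lambda>(\<alpha>, \<beta>). concat_str n k \<beta> \<alpha>" and ?split = "\<lambda>S. (?unshift ` (S - {1..n-k}), S \<inter> {1..n-k})"
  have split_concat: "?split (concat_str n k \<beta> \<alpha>) = (\<alpha>, \<beta>)"
    if "\<alpha> \<subseteq> {1..k}" "\<beta> \<subseteq> {1..n-k}" for \<alpha> \<beta>
  proof -
    have "concat_str n k \<beta> \<alpha> - {1..n-k} = ?shift ` \<alpha>" "concat_str n k \<beta> \<alpha> \<inter> {1..n-k} = \<beta>"
      using that by (auto simp: concat_str_def)
    then show ?thesis
      by (simp add: image_image)
  qed
  have concat_split: "?concat (?split S) = S"
    if "S \<subseteq> {1..n}" for S
  proof -
    have "?shift ` ?unshift ` (S - {1..n-k}) = S - {1..n-k}"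
      using that by (force simp: image_image intro: rev_image_eqI)
    then show ?thesis
      by (auto simp: concat_str_def)
  qed
  have "bij_betw ?concat (Pow {1..k} \<times> Pow {1..n-k}) (Pow {1..n})"
  proof (rule bij_betw_byWitness[where f' = ?split])
    show "\<forall>p\<in>Pow {1..k} \<times> Pow {1..n-k}. ?split (?concat p) = p"
      using split_concat by auto
    show "\<forall>S\<in>Pow {1..n}. ?concat (?split S) = S"
      using concat_split by auto
    show "?concat ` (Pow {1..k} \<times> Pow {1..n-k}) \<subseteq> Pow {1..n}"
      using assms by (fastforce simp: concat_str_def)
    show "?split ` Pow {1..n} \<subseteq> Pow {1..k} \<times> Pow {1..n-k}"
      by (auto simp: subset_iff)
  qed
  from sum.reindex_bij_betw[OF this, of h] show ?thesis
    by (simp add: sum.cartesian_product case_prod_beta)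
qed

lemma bn_phi_cong:
  assumes "x \<inter> insert v (pa v) = y \<inter> insert v (pa v)"
  shows "bn_phi pa cp v x = bn_phi pa cp v y"
proof -
  have "v \<in> x \<longleftrightarrow> v \<in> y" "x \<inter> pa v = y \<inter> pa v"
    using assms by blast+
  then show ?thesis
    by (simp add: bn_phi_def bn_sigma_def bn_mu_def)
qed

lemma bn_phiS_cong:
  assumes "\<And>v. v \<in> S \<Longrightarrow> x \<inter> insert v (pa v) = y \<inter> insert v (pa v)"
  shows "bn_phiS pa cp S x = bn_phiS pa cp S y"
  unfolding bn_phiS_def using assms by (intro prod.cong refl bn_phi_cong)

lemma bn_expect_sum: "bn_expect n pa cp (\<lambda>x. \<Sum>i\<in>I. h i x) = (\<Sum>i\<in>I. bn_expect n pa cp (h i))"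
  unfolding bn_expect_def by (simp add: sum_distrib_left sum.swap[of _ I])

lemma bn_expect_cmult: "bn_expect n pa cp (\<lambda>x. a * h x) = a * bn_expect n pa cp h"
  unfolding bn_expect_def by (simp add: sum_distrib_left algebra_simps)

lemma bn_expect_add: "bn_expect n pa cp (\<lambda>x. h x + g x) = bn_expect n pa cp h + bn_expect n pa cp g"
  unfolding bn_expect_def by (simp add: sum.distrib algebra_simps)

lemma bn_expect_diff: "bn_expect n pa cp (\<lambda>x. h x - g x) = bn_expect n pa cp h - bn_expect n pa cp g"
  unfolding bn_expect_def by (simp add: sum_subtractf algebra_simps)

locale bayes_net =
  fixes n :: nat and pa :: "nat \<Rightarrow> nat set" and cp :: "nat \<Rightarrow> nat set \<Rightarrow> real"
  assumes parents_before: "v \<in> {1..n} \<Longrightarrow> pa v \<subseteq> {1..<v}"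
    and cp_strict: "v \<in> {1..n} \<Longrightarrow> A \<subseteq> pa v \<Longrightarrow> 0 < cp v A \<and> cp v A < 1"
begin

lemma bn_prob_nonneg: "0 \<le> bn_prob n pa cp x"
  unfolding bn_prob_def bn_mu_def using cp_strict by (intro prod_nonneg) (auto simp: less_imp_le)

lemma bn_expect_nonneg: "(\<And>x. 0 \<le> h x) \<Longrightarrow> 0 \<le> bn_expect n pa cp h"
  unfolding bn_expect_def using bn_prob_nonneg by (simp add: sum_nonneg)

lemma bn_prob_Suc:
  assumes "m < n" "y \<subseteq> {1..m}"
  shows "bn_prob (Suc m) pa cp y = bn_prob m pa cp y * (1 - cp (Suc m) (y \<inter> pa (Suc m)))"
    and "bn_prob (Suc m) pa cp (insert (Suc m) y) = bn_prob m pa cp y * cp (Suc m) (y \<inter> pa (Suc m))"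
proof -
  let ?factor = "\<lambda>x v. if v \<in> x then bn_mu pa cp v x else 1 - bn_mu pa cp v x"
  have "{1..Suc m} = insert (Suc m) {1..m}"
    by auto
  then have last: "bn_prob (Suc m) pa cp x = (\<Prod>v\<in>{1..m}. ?factor x v) * ?factor x (Suc m)" for x
    by (simp add: bn_prob_def mult.commute)
  have "(\<Prod>v\<in>{1..m}. ?factor (insert (Suc m) y) v) = bn_prob m pa cp y"
    unfolding bn_prob_def
  proof (rule prod.cong)
    fix v assume v: "v \<in> {1..m}"
    then have "insert (Suc m) y \<inter> pa v = y \<inter> pa v"
      using parents_before[of v] assms(1) by auto
    then show "?factor (insert (Suc m) y) v = ?factor y v"
      using v by (simp add: bn_mu_def)
  qed simp
  moreover have "Suc m \<notin> pa (Suc m)" "Suc m \<notin> y"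
    using parents_before[of "Suc m"] assms by auto
  ultimately show "bn_prob (Suc m) pa cp y = bn_prob m pa cp y * (1 - cp (Suc m) (y \<inter> pa (Suc m)))"
    and "bn_prob (Suc m) pa cp (insert (Suc m) y) = bn_prob m pa cp y * cp (Suc m) (y \<inter> pa (Suc m))"
    unfolding last by (simp_all add: bn_prob_def bn_mu_def)
qed

lemma bn_expect_Suc:
  assumes "m < n"
  shows "bn_expect (Suc m) pa cp h = (\<Sum>y\<in>Pow {1..m}. bn_prob m pa cp y *
      ((1 - cp (Suc m) (y \<inter> pa (Suc m))) * h y + cp (Suc m) (y \<inter> pa (Suc m)) * h (insert (Suc m) y)))"
proof -
  have "{1..Suc m} = insert (Suc m) {1..m}"
    by auto
  then have "bn_expect (Suc m) pa cp h = (\<Sum>y\<in>Pow {1..m}.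
      bn_prob (Suc m) pa cp y * h y + bn_prob (Suc m) pa cp (insert (Suc m) y) * h (insert (Suc m) y))"
    unfolding bn_expect_def by (simp add: sum_Pow_insert)
  also have "\<dots> = (\<Sum>y\<in>Pow {1..m}. bn_prob m pa cp y *
      ((1 - cp (Suc m) (y \<inter> pa (Suc m))) * h y + cp (Suc m) (y \<inter> pa (Suc m)) * h (insert (Suc m) y)))"
  proof (intro sum.cong refl)
    fix y assume "y \<in> Pow {1..m}"
    then have y: "y \<subseteq> {1..m}"
      by simp
    show "bn_prob (Suc m) pa cp y * h y + bn_prob (Suc m) pa cp (insert (Suc m) y) * h (insert (Suc m) y)
      = bn_prob m pa cp y * ((1 - cp (Suc m) (y \<inter> pa (Suc m))) * h y
          + cp (Suc m) (y \<inter> pa (Suc m)) * h (insert (Suc m) y))"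
      unfolding bn_prob_Suc[OF assms y] by (simp add: algebra_simps)
  qed
  finally show ?thesis .
qed

lemma bn_phiS_split_last:
  assumes "m < n" "S \<subseteq> {1..Suc m}" "y \<subseteq> {1..m}"
    and \<mu>: "\<mu> = cp (Suc m) (y \<inter> pa (Suc m))"
  shows "bn_phiS pa cp S y
      = bn_phiS pa cp (S - {Suc m}) y * (if Suc m \<in> S then - \<mu> / sqrt (\<mu> * (1 - \<mu>)) else 1)"
    and "bn_phiS pa cp S (insert (Suc m) y)
      = bn_phiS pa cp (S - {Suc m}) y * (if Suc m \<in> S then (1 - \<mu>) / sqrt (\<mu> * (1 - \<mu>)) else 1)"
proof -
  have "finite S"
    using assms(2) finite_subset by blast
  then have split: "bn_phiS pa cp S x
      = bn_phiS pa cp (S - {Suc m}) x * (if Suc m \<in> S then bn_phi pa cp (Suc m) x else 1)" for x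
    by (cases "Suc m \<in> S") (simp_all add: bn_phiS_def prod.remove mult.commute)
  have "bn_phiS pa cp (S - {Suc m}) (insert (Suc m) y) = bn_phiS pa cp (S - {Suc m}) y"
  proof (rule bn_phiS_cong)
    fix v assume "v \<in> S - {Suc m}"
    then have "v \<in> {1..m}"
      using assms(2) by auto
    then show "insert (Suc m) y \<inter> insert v (pa v) = y \<inter> insert v (pa v)"
      using parents_before[of v] assms(1) by auto
  qed
  moreover have "Suc m \<notin> y" "Suc m \<notin> pa (Suc m)"
    using parents_before[of "Suc m"] assms by auto
  ultimately show "bn_phiS pa cp S y
      = bn_phiS pa cp (S - {Suc m}) y * (if Suc m \<in> S then - \<mu> / sqrt (\<mu> * (1 - \<mu>)) else 1)"
    and "bn_phiS pa cp S (insert (Suc m) y)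
      = bn_phiS pa cp (S - {Suc m}) y * (if Suc m \<in> S then (1 - \<mu>) / sqrt (\<mu> * (1 - \<mu>)) else 1)"
    unfolding split by (simp_all add: bn_phi_def bn_sigma_def bn_mu_def \<mu>)
qed

lemma bn_phiS_orthonormal:
  "m \<le> n \<Longrightarrow> S \<subseteq> {1..m} \<Longrightarrow> T \<subseteq> {1..m} \<Longrightarrow>
    bn_expect m pa cp (\<lambda>x. bn_phiS pa cp S x * bn_phiS pa cp T x) = (if S = T then 1 else 0)"
proof (induction m arbitrary: S T)
  case 0
  then show ?case
    by (simp add: bn_expect_def bn_prob_def bn_phiS_def)
next
  case (Suc m)
  let ?S = "S - {Suc m}" and ?T = "T - {Suc m}"
  define \<delta> :: real where "\<delta> = (if (Suc m \<in> S) = (Suc m \<in> T) then 1 else 0)"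
  have step: "(1 - \<mu>) * (bn_phiS pa cp S y * bn_phiS pa cp T y)
      + \<mu> * (bn_phiS pa cp S (insert (Suc m) y) * bn_phiS pa cp T (insert (Suc m) y))
      = bn_phiS pa cp ?S y * bn_phiS pa cp ?T y * \<delta>"
    if y: "y \<subseteq> {1..m}" and \<mu>: "\<mu> = cp (Suc m) (y \<inter> pa (Suc m))" for y \<mu>
  proof -
    let ?s = "sqrt (\<mu> * (1 - \<mu>))"
    let ?a0 = "if Suc m \<in> S then - \<mu> / ?s else 1" and ?a1 = "if Suc m \<in> S then (1 - \<mu>) / ?s else 1"
    let ?b0 = "if Suc m \<in> T then - \<mu> / ?s else 1" and ?b1 = "if Suc m \<in> T then (1 - \<mu>) / ?s else 1"
    have "0 < \<mu>" "\<mu> < 1"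
      using cp_strict[of "Suc m"] Suc.prems(1) \<mu> by auto
    then have "?s\<^sup>2 = \<mu> * (1 - \<mu>)" "?s \<noteq> 0"
      by simp_all
    then have orth: "(1 - \<mu>) * (?a0 * ?b0) + \<mu> * (?a1 * ?b1) = \<delta>"
      unfolding \<delta>_def by (rule bernoulli_standardized_orthonormal)
    have split: "bn_phiS pa cp S y = bn_phiS pa cp ?S y * ?a0"
      "bn_phiS pa cp S (insert (Suc m) y) = bn_phiS pa cp ?S y * ?a1"
      "bn_phiS pa cp T y = bn_phiS pa cp ?T y * ?b0"
      "bn_phiS pa cp T (insert (Suc m) y) = bn_phiS pa cp ?T y * ?b1"
      using bn_phiS_split_last[OF _ _ y \<mu>] Suc.prems by auto
    have "(1 - \<mu>) * (A * a0 * (B * b0)) + \<mu> * (A * a1 * (B * b1))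
        = A * B * ((1 - \<mu>) * (a0 * b0) + \<mu> * (a1 * b1))" for A B a0 a1 b0 b1 :: real
      by algebra
    then show ?thesis
      unfolding split orth[symmetric] .
  qed
  have "bn_expect (Suc m) pa cp (\<lambda>x. bn_phiS pa cp S x * bn_phiS pa cp T x)
      = (\<Sum>y\<in>Pow {1..m}. bn_prob m pa cp y * (bn_phiS pa cp ?S y * bn_phiS pa cp ?T y) * \<delta>)"
    using Suc.prems(1) by (simp add: bn_expect_Suc step mult.assoc)
  also have "\<dots> = bn_expect m pa cp (\<lambda>x. bn_phiS pa cp ?S x * bn_phiS pa cp ?T x) * \<delta>"
    by (simp add: bn_expect_def sum_distrib_right)
  also have "\<dots> = (if ?S = ?T then 1 else 0) * \<delta>"
    using Suc by (subst Suc.IH) auto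
  also have "\<dots> = (if S = T then 1 else 0)"
    unfolding \<delta>_def by auto
  finally show ?case .
qed

lemma bn_expect_square_sum:
  assumes "I \<subseteq> Pow {1..n}"
  shows "bn_expect n pa cp (\<lambda>x. (\<Sum>S\<in>I. c S * bn_phiS pa cp S x)\<^sup>2) = (\<Sum>S\<in>I. (c S)\<^sup>2)"
proof -
  have "(\<lambda>x. (\<Sum>S\<in>I. c S * bn_phiS pa cp S x)\<^sup>2)
      = (\<lambda>x. \<Sum>S\<in>I. \<Sum>T\<in>I. c S * c T * (bn_phiS pa cp S x * bn_phiS pa cp T x))"
    by (simp add: power2_eq_square sum_product algebra_simps)
  then have "bn_expect n pa cp (\<lambda>x. (\<Sum>S\<in>I. c S * bn_phiS pa cp S x)\<^sup>2)
      = (\<Sum>S\<in>I. \<Sum>T\<in>I. c S * c T * bn_expect n pa cp (\<lambda>x. bn_phiS pa cp S x * bn_phiS pa cp T x))"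
    by (simp add: bn_expect_sum bn_expect_cmult)
  also have "\<dots> = (\<Sum>S\<in>I. \<Sum>T\<in>I. c S * c T * (if S = T then 1 else 0))"
  proof (intro sum.cong refl)
    fix S T assume "S \<in> I" "T \<in> I"
    then have "S \<subseteq> {1..n}" "T \<subseteq> {1..n}"
      using assms by auto
    then show "c S * c T * bn_expect n pa cp (\<lambda>x. bn_phiS pa cp S x * bn_phiS pa cp T x)
        = c S * c T * (if S = T then 1 else 0)"
      by (simp add: bn_phiS_orthonormal)
  qed
  also have "\<dots> = (\<Sum>S\<in>I. (c S)\<^sup>2)"
    using finite_subset[OF assms] by (simp add: power2_eq_square if_distrib[where f="\<lambda>z. _ * z"] cong: if_cong)
  finally show ?thesis .
qed

lemma fourier_coeff_bessel:
  "(\<Sum>S\<in>Pow {1..n}. (fourier_coeff n pa cp f S)\<^sup>2) \<le> bn_expect n pa cp (\<lambda>x. (f x)\<^sup>2)"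
proof -
  let ?c = "fourier_coeff n pa cp f"
  define g where "g x = (\<Sum>S\<in>Pow {1..n}. ?c S * bn_phiS pa cp S x)" for x
  have g_square: "bn_expect n pa cp (\<lambda>x. (g x)\<^sup>2) = (\<Sum>S\<in>Pow {1..n}. (?c S)\<^sup>2)"
    unfolding g_def by (rule bn_expect_square_sum) simp
  have "(\<lambda>x. f x * g x) = (\<lambda>x. \<Sum>S\<in>Pow {1..n}. ?c S * (f x * bn_phiS pa cp S x))"
    unfolding g_def by (simp add: sum_distrib_left mult.left_commute)
  then have f_times_g: "bn_expect n pa cp (\<lambda>x. f x * g x) = (\<Sum>S\<in>Pow {1..n}. (?c S)\<^sup>2)"
    by (simp add: bn_expect_sum bn_expect_cmult power2_eq_square fourier_coeff_def)
  have "0 \<le> bn_expect n pa cp (\<lambda>x. (f x - g x)\<^sup>2)"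
    by (rule bn_expect_nonneg) simp
  also have "\<dots> = bn_expect n pa cp (\<lambda>x. (f x)\<^sup>2) + bn_expect n pa cp (\<lambda>x. (g x)\<^sup>2)
      - 2 * bn_expect n pa cp (\<lambda>x. f x * g x)"
    by (simp add: power2_diff bn_expect_diff bn_expect_add bn_expect_cmult mult.assoc)
  finally show ?thesis
    unfolding g_square f_times_g by simp
qed

lemma marg_expect_g_alpha_square:
  "marg_expect n k pa cp (\<lambda>u. (g_alpha n k pa cp f \<alpha> u)\<^sup>2)
    = (\<Sum>\<beta>\<in>Pow {1..n-k}. (fourier_coeff n pa cp f (concat_str n k \<beta> \<alpha>))\<^sup>2)"
proof -
  have restrict: "bn_phiS pa cp \<beta> (x \<inter> {1..n-k}) = bn_phiS pa cp \<beta> x" if "\<beta> \<subseteq> {1..n-k}" for \<beta> x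
  proof (rule bn_phiS_cong)
    fix v assume "v \<in> \<beta>"
    then have "v \<in> {1..n-k}"
      using that by auto
    moreover from this have "pa v \<subseteq> {1..<v}"
      by (intro parents_before) auto
    ultimately have "insert v (pa v) \<subseteq> {1..n-k}"
      by auto
    then show "x \<inter> {1..n-k} \<inter> insert v (pa v) = x \<inter> insert v (pa v)"
      by blast
  qed
  have "g_alpha n k pa cp f \<alpha> (x \<inter> {1..n-k})
      = (\<Sum>\<beta>\<in>Pow {1..n-k}. fourier_coeff n pa cp f (concat_str n k \<beta> \<alpha>) * bn_phiS pa cp \<beta> x)" for x
    unfolding g_alpha_def by (intro sum.cong refl) (simp only: Pow_iff restrict)
  then have "marg_expect n k pa cp (\<lambda>u. (g_alpha n k pa cp f \<alpha> u)\<^sup>2) = bn_expect n pa cp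
      (\<lambda>x. (\<Sum>\<beta>\<in>Pow {1..n-k}. fourier_coeff n pa cp f (concat_str n k \<beta> \<alpha>) * bn_phiS pa cp \<beta> x)\<^sup>2)"
    unfolding marg_expect_def by (simp only:)
  also have "\<dots> = (\<Sum>\<beta>\<in>Pow {1..n-k}. (fourier_coeff n pa cp f (concat_str n k \<beta> \<alpha>))\<^sup>2)"
    by (intro bn_expect_square_sum Pow_mono) auto
  finally show ?thesis .
qed

end

theorem mainTheorem3:
  fixes n k :: nat and pa :: "nat \<Rightarrow> nat set" and cp :: "nat \<Rightarrow> nat set \<Rightarrow> real"
    and f :: "nat set \<Rightarrow> real" and \<theta> :: real
  assumes topo: "\<forall>v\<in>{1..n}. pa v \<subseteq> {1..<v}"
    and cp_range: "\<forall>v\<in>{1..n}. \<forall>A. A \<subseteq> pa v \<longrightarrow> 0 < cp v A \<and> cp v A < 1"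
    and f_norm: "bn_expect n pa cp (\<lambda>x. (f x)\<^sup>2) \<le> 1"
    and theta_pos: "\<theta> > 0"
    and k_le: "k \<le> n"
  shows "real (card {S. S \<subseteq> {1..n} \<and> \<bar>fourier_coeff n pa cp f S\<bar> \<ge> \<theta>}) \<le> 1 / \<theta>\<^sup>2
    \<and> (\<forall>\<alpha>. \<alpha> \<subseteq> {1..k} \<longrightarrow>
          marg_expect n k pa cp (\<lambda>u. (g_alpha n k pa cp f \<alpha> u)\<^sup>2)
          = (\<Sum>\<beta>\<in>Pow {1..n-k}. (fourier_coeff n pa cp f (concat_str n k \<beta> \<alpha>))\<^sup>2))
    \<and> (\<forall>\<alpha>. \<alpha> \<subseteq> {1..k} \<longrightarrow>
          (\<exists>\<beta>. \<beta> \<subseteq> {1..n-k} \<and> \<bar>fourier_coeff n pa cp f (concat_str n k \<beta> \<alpha>)\<bar> \<ge> \<theta>) \<longrightarrow>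
          marg_expect n k pa cp (\<lambda>u. (g_alpha n k pa cp f \<alpha> u)\<^sup>2) \<ge> \<theta>\<^sup>2)
    \<and> real (card {\<alpha>. \<alpha> \<subseteq> {1..k} \<and>
          marg_expect n k pa cp (\<lambda>u. (g_alpha n k pa cp f \<alpha> u)\<^sup>2) \<ge> \<theta>\<^sup>2}) \<le> 1 / \<theta>\<^sup>2"
proof -
  interpret bayes_net n pa cp
    using topo cp_range by unfold_locales auto
  let ?c = "fourier_coeff n pa cp f"
  define E where "E \<alpha> = marg_expect n k pa cp (\<lambda>u. (g_alpha n k pa cp f \<alpha> u)\<^sup>2)" for \<alpha>
  have E_eq: "E \<alpha> = (\<Sum>\<beta>\<in>Pow {1..n-k}. (?c (concat_str n k \<beta> \<alpha>))\<^sup>2)" for \<alpha>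
    unfolding E_def by (rule marg_expect_g_alpha_square)
  have total: "(\<Sum>S\<in>Pow {1..n}. (?c S)\<^sup>2) \<le> 1"
    using fourier_coeff_bessel f_norm by (rule order_trans)
  have large: "\<theta>\<^sup>2 \<le> (?c S)\<^sup>2" if "\<theta> \<le> \<bar>?c S\<bar>" for S
    using that theta_pos abs_le_square_iff[of \<theta> "?c S"] by simp
  have few_large_coeffs: "real (card {S. S \<subseteq> {1..n} \<and> \<bar>?c S\<bar> \<ge> \<theta>}) \<le> 1 / \<theta>\<^sup>2"
    by (rule card_superlevel_le[where B = "Pow {1..n}" and h = "\<lambda>S. (?c S)\<^sup>2"])
      (use total large theta_pos in auto)
  have heavy_if_large_coeff: "\<theta>\<^sup>2 \<le> E \<alpha>" if "\<beta> \<subseteq> {1..n-k}" "\<theta> \<le> \<bar>?c (concat_str n k \<beta> \<alpha>)\<bar>" for \<alpha> \<beta>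
  proof -
    have "\<theta>\<^sup>2 \<le> (?c (concat_str n k \<beta> \<alpha>))\<^sup>2"
      using large that(2) .
    also have "\<dots> \<le> E \<alpha>"
      unfolding E_eq using that(1) by (intro member_le_sum) auto
    finally show ?thesis .
  qed
  have few_heavy_alphas: "real (card {\<alpha>. \<alpha> \<subseteq> {1..k} \<and> E \<alpha> \<ge> \<theta>\<^sup>2}) \<le> 1 / \<theta>\<^sup>2"
  proof (rule card_superlevel_le[where B = "Pow {1..k}" and h = E])
    show "sum E (Pow {1..k}) \<le> 1"
      unfolding E_eq sum_concat_str[OF k_le, of "\<lambda>S. (?c S)\<^sup>2"] by (rule total)
  qed (use theta_pos in \<open>auto simp: E_eq intro: sum_nonneg\<close>)
  show ?thesis
    using few_large_coeffs heavy_if_large_coeff few_heavy_alphas E_eq unfolding E_def by blast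
qed

end
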